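(* If $i \ne j \ne k \ne i$, then $w_{i,j,k}:=|\Lambda_i,\Lambda_j,\Lambda_k| \in I_{W_d}$.
   Context: Let $P_d$ be a convex polygon with $d\ge 4$ vertices $v_1,\dots,v_d$ (indices mod $d$) over a field $\mathbb{K}$ with no three edge lines concurrent. Set ${\bf v}_i=(v_i,1)$, ${\bf n}_i={\bf v}_i\times{\bf v}_{i+1}$, $\alpha_j=|{\bf v}_{j-1}\,{\bf v}_j\,{\bf v}_{j+1}|$, $\ell_j=|{\bf v}_j\,{\bf v}_{j+1}\,{\bf p}|$, $b_i=\alpha_i\prod_{j\ne i-1,i}\ell_j$; $W_d$ is the closure of the image of $p\mapsto(b_1,\dots,b_d)$ with ideal $I_{W_d}\subseteq S=\mathbb{K}[x_1,\ldots,x_d]$. $\Lambda_r=\frac{x_{r+1}}{\alpha_{r+1}}{\bf n}_{r+1}-\frac{x_r}{\alpha_r}{\bf n}_{r-1}\in S_1^3$, and $|\Lambda_i,\Lambda_j,\Lambda_k|$ is the determinant of the $3\times 3$ matrix of linear forms with these columns. *)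

theory Defs
  imports Main
begin

text \<open>Vectors in K^3 are triples. Indices of vertices/edges are natural numbers taken mod d
  (so the paper's v_1..v_d correspond to v 1, ..., v (d-1), v 0 = v d).\<close>

type_synonym 'a vec3 = "'a \<times> 'a \<times> 'a"

definition det3 :: "'a::comm_ring_1 vec3 \<Rightarrow> 'a vec3 \<Rightarrow> 'a vec3 \<Rightarrow> 'a" where
  "det3 u v w = (case u of (u1,u2,u3) \<Rightarrow> case v of (v1,v2,v3) \<Rightarrow> case w of (w1,w2,w3) \<Rightarrow>
      u1*(v2*w3 - v3*w2) - v1*(u2*w3 - u3*w2) + w1*(u2*v3 - u3*v2))"

definition cross3 :: "'a::comm_ring_1 vec3 \<Rightarrow> 'a vec3 \<Rightarrow> 'a vec3" where
  "cross3 u v = (case u of (u1,u2,u3) \<Rightarrow> case v of (v1,v2,v3) \<Rightarrow>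
      (u2*v3 - u3*v2, u3*v1 - u1*v3, u1*v2 - u2*v1))"

definition scale3 :: "'a::comm_ring_1 \<Rightarrow> 'a vec3 \<Rightarrow> 'a vec3" where
  "scale3 c u = (case u of (u1,u2,u3) \<Rightarrow> (c*u1, c*u2, c*u3))"

definition diff3 :: "'a::comm_ring_1 vec3 \<Rightarrow> 'a vec3 \<Rightarrow> 'a vec3" where
  "diff3 u v = (case u of (u1,u2,u3) \<Rightarrow> case v of (v1,v2,v3) \<Rightarrow> (u1-v1, u2-v2, u3-v3))"

definition hom :: "'a::comm_ring_1 \<times> 'a \<Rightarrow> 'a vec3" where
  "hom p = (fst p, snd p, 1)"

definition vtx :: "nat \<Rightarrow> (nat \<Rightarrow> 'a \<times> 'a) \<Rightarrow> nat \<Rightarrow> 'a::comm_ring_1 vec3" where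
  "vtx d v i = hom (v (i mod d))"

definition nrm :: "nat \<Rightarrow> (nat \<Rightarrow> 'a \<times> 'a) \<Rightarrow> nat \<Rightarrow> 'a::comm_ring_1 vec3" where
  "nrm d v i = cross3 (vtx d v i) (vtx d v (i + 1))"

definition prv :: "nat \<Rightarrow> nat \<Rightarrow> nat" where
  "prv d i = (i + d - 1) mod d"

definition alpha :: "nat \<Rightarrow> (nat \<Rightarrow> 'a \<times> 'a) \<Rightarrow> nat \<Rightarrow> 'a::comm_ring_1" where
  "alpha d v j = det3 (vtx d v (prv d j)) (vtx d v j) (vtx d v (j + 1))"

definition ell :: "nat \<Rightarrow> (nat \<Rightarrow> 'a \<times> 'a) \<Rightarrow> nat \<Rightarrow> 'a \<times> 'a \<Rightarrow> 'a::comm_ring_1" where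
  "ell d v j p = det3 (vtx d v j) (vtx d v (j + 1)) (hom p)"

definition bcoord :: "nat \<Rightarrow> (nat \<Rightarrow> 'a \<times> 'a) \<Rightarrow> nat \<Rightarrow> 'a \<times> 'a \<Rightarrow> 'a::comm_ring_1" where
  "bcoord d v i p = alpha d v i *
     (\<Prod>j \<in> {0..<d} - {prv d i, i mod d}. ell d v j p)"

text \<open>The map p \<mapsto> (b_1,...,b_d); points of K^d are functions nat \<Rightarrow> K
  (only the coordinates 0..d-1 matter, the others are set to 0).\<close>
definition bmap :: "nat \<Rightarrow> (nat \<Rightarrow> 'a \<times> 'a) \<Rightarrow> 'a \<times> 'a \<Rightarrow> (nat \<Rightarrow> 'a::comm_ring_1)" where
  "bmap d v p = (\<lambda>i. if i < d then bcoord d v i p else 0)"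

text \<open>Image of the parametrization (W_d is its Zariski closure).\<close>
definition Wimage :: "nat \<Rightarrow> (nat \<Rightarrow> 'a \<times> 'a) \<Rightarrow> (nat \<Rightarrow> 'a::comm_ring_1) set" where
  "Wimage d v = range (bmap d v)"

text \<open>Ideal of W_d: polynomials (given as polynomial functions K^d \<rightarrow> K) vanishing on W_d;
  a polynomial vanishes on the Zariski closure of a set iff it vanishes on the set.\<close>
definition I_W :: "nat \<Rightarrow> (nat \<Rightarrow> 'a \<times> 'a) \<Rightarrow> ((nat \<Rightarrow> 'a::comm_ring_1) \<Rightarrow> 'a) set" where
  "I_W d v = {f. \<forall>y \<in> Wimage d v. f y = 0}"

definition Lam :: "nat \<Rightarrow> (nat \<Rightarrow> 'a \<times> 'a) \<Rightarrow> nat \<Rightarrow> (nat \<Rightarrow> 'a) \<Rightarrow> 'a::field vec3" where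
  "Lam d v r x = diff3
      (scale3 (x ((r + 1) mod d) / alpha d v (r + 1)) (nrm d v (r + 1)))
      (scale3 (x (r mod d) / alpha d v r) (nrm d v (prv d r)))"

definition w_ijk :: "nat \<Rightarrow> (nat \<Rightarrow> 'a \<times> 'a) \<Rightarrow> nat \<Rightarrow> nat \<Rightarrow> nat \<Rightarrow> (nat \<Rightarrow> 'a) \<Rightarrow> 'a::field" where
  "w_ijk d v i j k x = det3 (Lam d v i x) (Lam d v j x) (Lam d v k x)"

definition convex_polygon :: "nat \<Rightarrow> (nat \<Rightarrow> 'a::linordered_field \<times> 'a) \<Rightarrow> bool" where
  "convex_polygon d v \<longleftrightarrow> d \<ge> 3 \<and>
     ((\<forall>i<d. \<forall>j<d. j \<noteq> i \<and> j \<noteq> (i + 1) mod d \<longrightarrow>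
         det3 (vtx d v i) (vtx d v (i + 1)) (vtx d v j) > 0) \<or>
      (\<forall>i<d. \<forall>j<d. j \<noteq> i \<and> j \<noteq> (i + 1) mod d \<longrightarrow>
         det3 (vtx d v i) (vtx d v (i + 1)) (vtx d v j) < 0))"

definition no_three_concurrent :: "nat \<Rightarrow> (nat \<Rightarrow> 'a::comm_ring_1 \<times> 'a) \<Rightarrow> bool" where
  "no_three_concurrent d v \<longleftrightarrow>
     (\<forall>i<d. \<forall>j<d. \<forall>k<d. i \<noteq> j \<and> j \<noteq> k \<and> i \<noteq> k \<longrightarrow>
        \<not> (\<exists>p. ell d v i p = 0 \<and> ell d v j p = 0 \<and> ell d v k p = 0))"

end

theory Submission
  imports Defs
begin

text \<open>At a point y = b(p) of the parametrization, both summands of Lambda_r(y) pair with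
  (p, 1) to the same product of all ell_j(p) with j \<noteq> r: the coefficient y_{r+1} / alpha_{r+1}
  is the product of the ell_j(p) with j \<noteq> r, r+1, and n_{r+1} \<cdot> (p, 1) = ell_{r+1}(p) supplies
  the missing factor; symmetrically for the second summand. Hence Lambda_i(y), Lambda_j(y),
  Lambda_k(y) lie in the plane orthogonal to the nonzero vector (p, 1), and their determinant
  vanishes.\<close>

definition dot3 :: "'a::comm_ring_1 vec3 \<Rightarrow> 'a vec3 \<Rightarrow> 'a" where
  "dot3 u v = (case u of (u1,u2,u3) \<Rightarrow> case v of (v1,v2,v3) \<Rightarrow> u1*v1 + u2*v2 + u3*v3)"

lemma dot3_diff3_scale3:
  "dot3 (diff3 (scale3 c1 u1) (scale3 c2 u2)) w = c1 * dot3 u1 w - c2 * dot3 u2 w"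
  by (cases u1; cases u2; cases w) (simp add: dot3_def diff3_def scale3_def algebra_simps)

lemma det3_cross3_eq_dot3: "det3 u v w = dot3 (cross3 u v) w"
  by (cases u; cases v; cases w) (simp add: det3_def cross3_def dot3_def algebra_simps)

lemma det3_rotate: "det3 u v w = det3 v w u"
  by (cases u; cases v; cases w) (simp add: det3_def algebra_simps)

lemma det3_eq_0_if_orthogonal:
  fixes a b c q :: "'a::field vec3"
  assumes "dot3 a q = 0" "dot3 b q = 0" "dot3 c q = 0" and "q \<noteq> (0, 0, 0)"
  shows "det3 a b c = 0"
proof -
  obtain a1 a2 a3 b1 b2 b3 c1 c2 c3 q1 q2 q3
    where abcq: "a = (a1, a2, a3)" "b = (b1, b2, b3)" "c = (c1, c2, c3)" "q = (q1, q2, q3)"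
    by (cases a; cases b; cases c; cases q)
  \<comment> \<open>\<open>det3 a b c \<cdot> q = (a\<cdot>q) (b \<times> c) + (b\<cdot>q) (c \<times> a) + (c\<cdot>q) (a \<times> b)\<close>\<close>
  have "det3 a b c * q1 = 0" "det3 a b c * q2 = 0" "det3 a b c * q3 = 0"
    using assms(1-3) unfolding abcq det3_def dot3_def by simp_all algebra+
  then show ?thesis using assms(4) abcq by auto
qed

lemma ell_eq_dot3_nrm: "ell d v j p = dot3 (nrm d v j) (hom p)"
  unfolding ell_def nrm_def by (rule det3_cross3_eq_dot3)

lemma prv_mod: "prv d (n mod d) = prv d n"
proof (cases "d = 0")
  case False
  then have "n mod d + d - 1 = n mod d + (d - 1)" "n + d - 1 = n + (d - 1)" by auto
  then show ?thesis unfolding prv_def by (simp add: mod_add_left_eq)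
qed (simp add: prv_def)

lemma prv_Suc_mod: "prv d ((n + 1) mod d) = n mod d"
  by (simp add: prv_mod) (simp add: prv_def)

lemma prv_less: "0 < d \<Longrightarrow> prv d n < d"
  by (simp add: prv_def)

lemma prv_neq_mod: "2 \<le> d \<Longrightarrow> prv d n \<noteq> n mod d"
proof
  assume d: "2 \<le> d" and "prv d n = n mod d"
  then have "(n + d - 1) mod d = n mod d" by (simp add: prv_def)
  then have "d dvd d - 1" using d by (subst (asm) mod_eq_dvd_iff_nat) auto
  then show False using d by (simp add: nat_dvd_not_less)
qed

lemma prv_neq_Suc_mod: "3 \<le> d \<Longrightarrow> prv d n \<noteq> (n + 1) mod d"
proof
  assume d: "3 \<le> d" and "prv d n = (n + 1) mod d"
  then have "(n + d - 1) mod d = (n + 1) mod d" by (simp add: prv_def)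
  then have "d dvd d - 2" using d by (subst (asm) mod_eq_dvd_iff_nat) auto
  then show False using d by (simp add: nat_dvd_not_less)
qed

lemma ell_mod: "ell d v (n mod d) p = ell d v n p"
  by (simp add: ell_def vtx_def mod_Suc_eq)

lemma alpha_mod: "alpha d v (n mod d) = alpha d v n"
  by (simp add: alpha_def vtx_def mod_Suc_eq prv_mod)

lemma convex_polygon_det3_nonzero:
  assumes "convex_polygon d v" "i < d" "j < d" "j \<noteq> i" "j \<noteq> (i + 1) mod d"
  shows "det3 (vtx d v i) (vtx d v (i + 1)) (vtx d v j) \<noteq> 0"
  using assms unfolding convex_polygon_def by (metis less_irrefl)

lemma alpha_nonzero:
  assumes "convex_polygon d v"
  shows "alpha d v n \<noteq> 0"
proof -
  have d: "3 \<le> d" using assms by (simp add: convex_polygon_def)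
  have "det3 (vtx d v (n mod d)) (vtx d v (n mod d + 1)) (vtx d v (prv d n)) \<noteq> 0"
    using convex_polygon_det3_nonzero[OF assms] d prv_less prv_neq_mod prv_neq_Suc_mod
    by (simp add: mod_Suc_eq)
  moreover have "vtx d v (n mod d) = vtx d v n" "vtx d v (n mod d + 1) = vtx d v (n + 1)"
    by (simp_all add: vtx_def mod_Suc_eq)
  ultimately show ?thesis
    by (metis alpha_def det3_rotate)
qed

lemma bmap_eq_alpha_prod:
  "m < d \<Longrightarrow> bmap d v p m = alpha d v m * (\<Prod>j \<in> {0..<d} - {prv d m, m}. ell d v j p)"
  by (simp add: bmap_def bcoord_def)

lemma Lam_bmap_orthogonal:
  fixes v :: "nat \<Rightarrow> 'a::field \<times> 'a"
  assumes d: "2 \<le> d" and "alpha d v r \<noteq> 0" "alpha d v (r + 1) \<noteq> 0"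
  shows "dot3 (Lam d v r (bmap d v p)) (hom p) = 0"
proof -
  define t s where "t = r mod d" and "s = (r + 1) mod d"
  define A where "A = {0..<d} - {t}"
  define P where "P = (\<Prod>j \<in> A. ell d v j p)"
  have "s \<noteq> t" using prv_neq_mod[OF d, of s] prv_Suc_mod[of d r] by (simp add: s_def t_def)
  then have s: "s \<in> A" "s < d" using d by (auto simp: A_def s_def)
  have "prv d r \<noteq> t" using prv_neq_mod[OF d] by (simp add: t_def)
  then have prv: "prv d r \<in> A" using d prv_less[of d r] by (simp add: A_def)
  have "bmap d v p s / alpha d v (r + 1) * ell d v (r + 1) p
      = (\<Prod>j \<in> A - {s}. ell d v j p) * ell d v s p"
    using assms s prv_Suc_mod[of d r] alpha_mod[of d v "r + 1"] ell_mod[of d v "r + 1"]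
    by (simp add: bmap_eq_alpha_prod s_def t_def A_def Diff_insert2[symmetric] insert_commute)
  also have "\<dots> = P"
    unfolding P_def by (subst prod.remove[OF _ s(1)]) (simp_all add: A_def mult.commute)
  finally have next_term: "bmap d v p s / alpha d v (r + 1) * ell d v (r + 1) p = P" .
  have "bmap d v p t / alpha d v r * ell d v (prv d r) p
      = (\<Prod>j \<in> A - {prv d r}. ell d v j p) * ell d v (prv d r) p"
    using assms d by (simp add: bmap_eq_alpha_prod t_def A_def prv_mod alpha_mod
        Diff_insert2[symmetric] insert_commute)
  also have "\<dots> = P"
    unfolding P_def by (subst prod.remove[OF _ prv]) (simp_all add: A_def mult.commute)
  finally have prev_term: "bmap d v p t / alpha d v r * ell d v (prv d r) p = P" .
  show ?thesis
    using next_term prev_term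
    by (simp add: Lam_def dot3_diff3_scale3 ell_eq_dot3_nrm s_def t_def)
qed

theorem theorem4p1:
  fixes d :: nat and v :: "nat \<Rightarrow> 'a::linordered_field \<times> 'a" and i j k :: nat
  assumes "d \<ge> 4"
    and "convex_polygon d v"
    and "no_three_concurrent d v"
    and "i < d" and "j < d" and "k < d"
    and "i \<noteq> j" and "j \<noteq> k" and "k \<noteq> i"
  shows "w_ijk d v i j k \<in> I_W d v"
  unfolding I_W_def Wimage_def
proof (intro CollectI ballI)
  fix y assume "y \<in> range (bmap d v)"
  then obtain p where y: "y = bmap d v p" by blast
  have orthogonal: "dot3 (Lam d v r y) (hom p) = 0" for r
    using Lam_bmap_orthogonal[of d v r p] alpha_nonzero[OF assms(2)] assms(1) y by simp
  have "hom p \<noteq> (0, 0, 0)" by (simp add: hom_def)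
  then show "w_ijk d v i j k y = 0"
    unfolding w_ijk_def by (rule det3_eq_0_if_orthogonal[OF orthogonal orthogonal orthogonal])
qed

end
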